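(* The functional $\delta$ defines a finite metric on $\mathrm{Conv}_{\mathrm{coe}}(\mathbb{R}^n)$. Furthermore, $\delta(u,v)=\delta(u(\cdot-x_0)+t_0,\,v(\cdot-x_0)+t_0)$ for every $u,v\in\mathrm{Conv}_{\mathrm{coe}}(\mathbb{R}^n)$, $x_0\in\mathbb{R}^n$ and $t_0\in\mathbb{R}$.
   Context: $\mathrm{Conv}_{\mathrm{coe}}(\mathbb{R}^n)$ is the set of proper, lower semicontinuous, convex, coercive functions $u:\mathbb{R}^n\to\mathbb{R}\cup\{+\infty\}$. $u^*(y)=\sup_x(\langle x,y\rangle-u(x))$ is the convex conjugate. For $\lambda>0$, $\|u^*-v^*\|_{\infty,\frac1\lambda B^n}=\sup_{|x|\le1/\lambda}|u^*(x)-v^*(x)|$. Define $\delta(u,v)=\inf\{\lambda>0:\|u^*-v^*\|_{\infty,\frac1\lambda B^n}\le\lambda\}$; equivalently $\delta(u,v)=\inf\{\lambda>0: u\ge v\,\Box\,(n_\lambda-\lambda)\text{ and }v\ge u\,\Box\,(n_\lambda-\lambda)\}$ where $n_\lambda(x)=|x|/\lambda$ and $\Box$ is infimal convolution. *)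

theory Defs
  imports "HOL-Analysis.Analysis"
begin

definition proper_fn :: "('a \<Rightarrow> ereal) \<Rightarrow> bool" where
  "proper_fn u \<longleftrightarrow> (\<forall>x. u x \<noteq> -\<infinity>) \<and> (\<exists>x. u x \<noteq> \<infinity>)"

definition lsc_fn :: "('a::topological_space \<Rightarrow> ereal) \<Rightarrow> bool" where
  "lsc_fn u \<longleftrightarrow> (\<forall>t::real. closed {x. u x \<le> ereal t})"

definition convex_fn :: "('a::real_vector \<Rightarrow> ereal) \<Rightarrow> bool" where
  "convex_fn u \<longleftrightarrow> convex {(x, t::real). u x \<le> ereal t}"

definition coercive_fn :: "('a::real_normed_vector \<Rightarrow> ereal) \<Rightarrow> bool" where
  "coercive_fn u \<longleftrightarrow> (u \<longlongrightarrow> \<infinity>) at_infinity"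

definition Conv_coe :: "('a::euclidean_space \<Rightarrow> ereal) set" where
  "Conv_coe = {u. proper_fn u \<and> lsc_fn u \<and> convex_fn u \<and> coercive_fn u}"

definition conj_fn :: "('a::euclidean_space \<Rightarrow> ereal) \<Rightarrow> 'a \<Rightarrow> ereal" where
  "conj_fn u y = (SUP x. ereal (x \<bullet> y) - u x)"

text \<open>The condition ||u* - v*||_{infinity, (1/lambda) B^n} <= lambda, read in the
  extended reals as |u* - v*| <= lambda pointwise on the ball.\<close>
definition delta_ok :: "('a::euclidean_space \<Rightarrow> ereal) \<Rightarrow> ('a \<Rightarrow> ereal) \<Rightarrow> real \<Rightarrow> bool" where
  "delta_ok u v l \<longleftrightarrow> (\<forall>x. norm x \<le> 1 / l \<longrightarrow>
      conj_fn u x \<le> conj_fn v x + ereal l \<and> conj_fn v x \<le> conj_fn u x + ereal l)"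

definition delta :: "('a::euclidean_space \<Rightarrow> ereal) \<Rightarrow> ('a \<Rightarrow> ereal) \<Rightarrow> real" where
  "delta u v = Inf {l. l > 0 \<and> delta_ok u v l}"

end

(*
  A proper coercive convex function grows at least linearly, u(z) >= r |z| - K, so its
  conjugate is bounded above by K on the ball of radius r; one finite value of u bounds u*
  from below there.  Hence u* - v* is bounded near the origin and delta(u, v) is finite.
  Symmetry and the triangle inequality are inherited from sup-distances of conjugates on
  shrinking balls, and delta(u, v) = 0 forces u* = v*, hence u = v by the Fenchel-Moreau
  theorem u** = u, which comes from separating points from the closed convex epigraph.
  Finally, translating u by x0 and adding t0 adds the affine function <x0, y> - t0 to u*,
  which cancels in u* - v*.
*)

theory Submission
  imports Defs
begin

section \<open>Affine minorants and the Fenchel--Moreau theorem\<close>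

definition epigraph :: "('a \<Rightarrow> ereal) \<Rightarrow> ('a \<times> real) set" where
  "epigraph u = {(x, t). u x \<le> ereal t}"

definition affine_minorant :: "('a::real_inner \<Rightarrow> ereal) \<Rightarrow> 'a \<Rightarrow> real \<Rightarrow> bool" where
  "affine_minorant u a c \<longleftrightarrow> (\<forall>z. ereal (a \<bullet> z + c) \<le> u z)"

lemma epigraph_eq_INT_sublevel:
  "epigraph u = (\<Inter>s. {x. u x \<le> ereal s} \<times> UNIV \<union> UNIV \<times> {s..})"
proof (intro set_eqI iffI)
  fix p :: "'a \<times> real"
  assume "p \<in> (\<Inter>s. {x. u x \<le> ereal s} \<times> UNIV \<union> UNIV \<times> {s..})"
  then have "u (fst p) \<le> ereal s" if "snd p < s" for s
    using that by (cases p) fastforce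
  then show "p \<in> epigraph u"
    unfolding epigraph_def by (cases p) (auto intro: ereal_le_epsilon2)
qed (auto simp: epigraph_def intro: order_trans)

lemma closed_epigraph:
  assumes "lsc_fn u" shows "closed (epigraph u)"
  using assms unfolding lsc_fn_def epigraph_eq_INT_sublevel
  by (auto intro!: closed_Times)

lemma epigraph_separation:
  fixes u :: "'a::euclidean_space \<Rightarrow> ereal"
  assumes "lsc_fn u" "convex_fn u" "\<not> u x \<le> ereal t" "u x1 \<noteq> \<infinity>"
  shows "\<exists>a \<alpha> b. 0 \<le> \<alpha> \<and> a \<bullet> x + \<alpha> * t < b \<and> (\<forall>z s. u z \<le> ereal s \<longrightarrow> b < a \<bullet> z + \<alpha> * s)"
proof -
  have "convex (epigraph u)" "(x, t) \<notin> epigraph u"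
    using assms(2,3) unfolding convex_fn_def epigraph_def by auto
  then obtain p b where p: "p \<bullet> (x, t) < b" "\<forall>q\<in>epigraph u. b < p \<bullet> q"
    using separating_hyperplane_closed_point closed_epigraph[OF assms(1)] by blast
  obtain a \<alpha> where p_eq: "p = (a, \<alpha>)" by fastforce
  have sep: "\<forall>z s. u z \<le> ereal s \<longrightarrow> b < a \<bullet> z + \<alpha> * s"
    using p(2) unfolding p_eq epigraph_def by auto
  obtain s0 where s0: "u x1 \<le> ereal s0"
    using assms(4) by (cases "u x1") auto
  have "0 \<le> \<alpha>"
  proof (rule ccontr)
    assume neg: "\<not> 0 \<le> \<alpha>"
    define s where "s = max s0 ((b - a \<bullet> x1) / \<alpha>)"
    have "u x1 \<le> ereal s" using s0 unfolding s_def by (auto intro: order_trans)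
    then have "b < a \<bullet> x1 + \<alpha> * s" using sep by blast
    moreover have "\<alpha> * s \<le> \<alpha> * ((b - a \<bullet> x1) / \<alpha>)"
      using neg unfolding s_def by (intro mult_left_mono_neg) auto
    ultimately show False using neg by simp
  qed
  with p(1) sep show ?thesis unfolding p_eq by auto
qed

lemma affine_minorant_of_separation:
  assumes "0 < \<alpha>" "\<forall>z s. u z \<le> ereal s \<longrightarrow> b < a \<bullet> z + \<alpha> * s"
  shows "affine_minorant u (- a /\<^sub>R \<alpha>) (b / \<alpha>)"
  unfolding affine_minorant_def
proof
  fix z show "ereal ((- a /\<^sub>R \<alpha>) \<bullet> z + b / \<alpha>) \<le> u z"
  proof (rule ereal_le_real)
    fix s assume "u z \<le> ereal s"
    then have "b < a \<bullet> z + \<alpha> * s" using assms(2) by blast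
    then show "ereal ((- a /\<^sub>R \<alpha>) \<bullet> z + b / \<alpha>) \<le> ereal s"
      using assms(1) by (simp add: field_simps)
  qed
qed

lemma affine_minorant_tilt:
  assumes "affine_minorant u a0 c0" "\<forall>z s. u z \<le> ereal s \<longrightarrow> b < a \<bullet> z" "0 \<le> k"
  shows "affine_minorant u (a0 - k *\<^sub>R a) (c0 + k * b)"
  unfolding affine_minorant_def
proof
  fix z show "ereal ((a0 - k *\<^sub>R a) \<bullet> z + (c0 + k * b)) \<le> u z"
  proof (rule ereal_le_real)
    fix s assume us: "u z \<le> ereal s"
    then have "b < a \<bullet> z" using assms(2) by blast
    then have "k * (b - a \<bullet> z) \<le> 0"
      using assms(3) by (simp add: mult_nonneg_nonpos)
    then have "(a0 - k *\<^sub>R a) \<bullet> z + (c0 + k * b) \<le> a0 \<bullet> z + c0"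
      by (simp add: algebra_simps)
    also have "ereal (a0 \<bullet> z + c0) \<le> ereal s"
      using assms(1) us unfolding affine_minorant_def by (blast intro: order_trans)
    finally show "ereal ((a0 - k *\<^sub>R a) \<bullet> z + (c0 + k * b)) \<le> ereal s" by simp
  qed
qed

lemma proper_fn_obtain_finite:
  assumes "proper_fn u" obtains x c where "u x = ereal c"
  using assms unfolding proper_fn_def by (metis ereal_cases)

lemma affine_minorant_exists:
  fixes u :: "'a::euclidean_space \<Rightarrow> ereal"
  assumes "proper_fn u" "lsc_fn u" "convex_fn u"
  obtains a c where "affine_minorant u a c"
proof -
  obtain x0 c0 where x0: "u x0 = ereal c0" using proper_fn_obtain_finite[OF assms(1)] .
  obtain a \<alpha> b where sep: "a \<bullet> x0 + \<alpha> * (c0 - 1) < b" "\<forall>z s. u z \<le> ereal s \<longrightarrow> b < a \<bullet> z + \<alpha> * s"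
    using epigraph_separation[OF assms(2,3), of x0 "c0 - 1" x0] x0 by auto
  have "b < a \<bullet> x0 + \<alpha> * c0" using sep(2) x0 by simp
  with sep(1) have "0 < \<alpha>" by (simp add: algebra_simps)
  with sep(2) show ?thesis using affine_minorant_of_separation that by blast
qed

lemma affine_minorant_above:
  fixes u :: "'a::euclidean_space \<Rightarrow> ereal"
  assumes "proper_fn u" "lsc_fn u" "convex_fn u" "\<not> u x \<le> ereal t"
  obtains a c where "affine_minorant u a c" "t < a \<bullet> x + c"
proof -
  obtain x1 c1 where "u x1 = ereal c1" using proper_fn_obtain_finite[OF assms(1)] .
  then obtain a \<alpha> b where sep: "0 \<le> \<alpha>" "a \<bullet> x + \<alpha> * t < b"
    "\<forall>z s. u z \<le> ereal s \<longrightarrow> b < a \<bullet> z + \<alpha> * s"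
    using epigraph_separation[OF assms(2-4), of x1] by auto
  show ?thesis
  proof (cases "\<alpha> = 0")
    case True
    \<comment> \<open>A vertical hyperplane only cuts off points outside the domain of \<open>u\<close>; tilting an
      arbitrary affine minorant along it pushes its value at \<open>x\<close> above \<open>t\<close>.\<close>
    obtain a0 c0 where m: "affine_minorant u a0 c0"
      using affine_minorant_exists[OF assms(1-3)] .
    define k where "k = max 0 ((t - a0 \<bullet> x - c0) / (b - a \<bullet> x)) + 1"
    have gap: "0 < b - a \<bullet> x" using sep(2) True by simp
    have "t - a0 \<bullet> x - c0 < k * (b - a \<bullet> x)"
      using gap unfolding k_def by (simp add: pos_divide_less_eq [symmetric])
    then have "t < (a0 - k *\<^sub>R a) \<bullet> x + (c0 + k * b)"
      by (simp add: algebra_simps)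
    moreover have "affine_minorant u (a0 - k *\<^sub>R a) (c0 + k * b)"
      using sep(3) True by (intro affine_minorant_tilt[OF m]) (auto simp: k_def)
    ultimately show ?thesis using that by blast
  next
    case False
    then have "0 < \<alpha>" using sep(1) by simp
    then have "t < (- a /\<^sub>R \<alpha>) \<bullet> x + b / \<alpha>"
      using sep(2) by (simp add: field_simps)
    then show ?thesis using that affine_minorant_of_separation[OF \<open>0 < \<alpha>\<close> sep(3)] by blast
  qed
qed

lemma affine_minorant_iff_conj_fn_le:
  "affine_minorant u a c \<longleftrightarrow> conj_fn u a \<le> ereal (- c)"
proof -
  have "ereal (z \<bullet> a) - u z \<le> ereal (- c) \<longleftrightarrow> ereal (a \<bullet> z + c) \<le> u z" for z
    by (cases "u z") (auto simp: inner_commute)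
  then show ?thesis unfolding affine_minorant_def conj_fn_def SUP_le_iff by simp
qed

lemma Fenchel_Young: "ereal (x \<bullet> y) - u x \<le> conj_fn u y"
  unfolding conj_fn_def by (rule SUP_upper) simp

lemma conj_fn_conj_fn_le: "conj_fn (conj_fn u) x \<le> u x"
proof -
  have "ereal (y \<bullet> x) - conj_fn u y \<le> u x" for y
    using Fenchel_Young[of x y u]
    by (cases "u x"; cases "conj_fn u y") (auto simp: inner_commute)
  then show ?thesis unfolding conj_fn_def[of "conj_fn u"] by (simp add: SUP_le_iff)
qed

theorem Fenchel_Moreau:
  fixes u :: "'a::euclidean_space \<Rightarrow> ereal"
  assumes "proper_fn u" "lsc_fn u" "convex_fn u"
  shows "conj_fn (conj_fn u) = u"
proof (intro ext antisym conj_fn_conj_fn_le)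
  fix x
  show "u x \<le> conj_fn (conj_fn u) x"
  proof (rule dense_le)
    fix y :: ereal assume "y < u x"
    show "y \<le> conj_fn (conj_fn u) x"
    proof (cases y)
      case (real t)
      with \<open>y < u x\<close> have "\<not> u x \<le> ereal t" by auto
      then obtain a c where m: "affine_minorant u a c" and t: "t < a \<bullet> x + c"
        by (rule affine_minorant_above[OF assms])
      have "y \<le> ereal (a \<bullet> x + c)" using t real by simp
      also have "\<dots> \<le> ereal (a \<bullet> x) - conj_fn u a"
        using m unfolding affine_minorant_iff_conj_fn_le
        by (metis ereal_minus(1) ereal_minus_mono order_refl diff_minus_eq_add)
      also have "\<dots> \<le> conj_fn (conj_fn u) x"
        unfolding conj_fn_def[of "conj_fn u"] by (rule SUP_upper2[of a]) (auto simp: inner_commute)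
      finally show ?thesis .
    qed (use \<open>y < u x\<close> in auto)
  qed
qed

lemma conj_fn_inject:
  fixes u v :: "'a::euclidean_space \<Rightarrow> ereal"
  assumes "proper_fn u" "lsc_fn u" "convex_fn u" "proper_fn v" "lsc_fn v" "convex_fn v"
    and "conj_fn u = conj_fn v"
  shows "u = v"
proof -
  have "u = conj_fn (conj_fn u)" using Fenchel_Moreau[OF assms(1-3)] by simp
  also have "\<dots> = conj_fn (conj_fn v)" using assms(7) by simp
  also have "\<dots> = v" using Fenchel_Moreau[OF assms(4-6)] .
  finally show ?thesis .
qed

section \<open>Conjugates of coercive convex functions near the origin\<close>

lemma convex_fn_le:
  assumes "convex_fn u" "u x \<le> ereal s" "u y \<le> ereal r" "0 \<le> \<theta>" "\<theta> \<le> 1"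
  shows "u ((1 - \<theta>) *\<^sub>R x + \<theta> *\<^sub>R y) \<le> ereal ((1 - \<theta>) * s + \<theta> * r)"
proof -
  have "(1 - \<theta>) *\<^sub>R (x, s) + \<theta> *\<^sub>R (y, r) \<in> {(x, t). u x \<le> ereal t}"
    using assms unfolding convex_fn_def by (intro convexD) auto
  then show ?thesis by simp
qed

lemma convex_fn_growth_beyond_sphere:
  assumes "convex_fn u" "u x0 \<le> ereal c" "0 < R"
    and sphere: "\<forall>w. norm (w - x0) = R \<longrightarrow> ereal (c + 1) < u w"
    and far: "R \<le> norm (z - x0)"
  shows "ereal (c + norm (z - x0) / R) \<le> u z"
proof (rule ereal_le_real)
  fix s assume us: "u z \<le> ereal s"
  define \<theta> where "\<theta> = R / norm (z - x0)"
  have dist_pos: "0 < norm (z - x0)" using far \<open>0 < R\<close> by linarith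
  then have \<theta>: "0 < \<theta>" "\<theta> \<le> 1" unfolding \<theta>_def using far \<open>0 < R\<close> by auto
  define w where "w = (1 - \<theta>) *\<^sub>R x0 + \<theta> *\<^sub>R z"
  have "w - x0 = \<theta> *\<^sub>R (z - x0)" unfolding w_def by (simp add: algebra_simps)
  then have "norm (w - x0) = R" unfolding \<theta>_def using dist_pos \<open>0 < R\<close> by simp
  then have "ereal (c + 1) < u w" using sphere by blast
  also have "u w \<le> ereal ((1 - \<theta>) * c + \<theta> * s)"
    unfolding w_def using convex_fn_le[OF assms(1,2) us] \<theta> by simp
  finally have "1 / \<theta> < s - c" using \<theta> by (simp add: field_simps)
  then show "ereal (c + norm (z - x0) / R) \<le> ereal s" unfolding \<theta>_def by simp
qed

lemma Conv_coe_linear_growth: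
  fixes u :: "'a::euclidean_space \<Rightarrow> ereal"
  assumes "u \<in> Conv_coe"
  obtains r K where "0 < r" "\<forall>z. ereal (r * norm z - K) \<le> u z"
proof -
  have pr: "proper_fn u" and cv: "convex_fn u"
    using assms unfolding Conv_coe_def by auto
  obtain x0 c where x0: "u x0 = ereal c" using proper_fn_obtain_finite[OF pr] .
  obtain a0 d0 where m: "affine_minorant u a0 d0"
    using affine_minorant_exists assms unfolding Conv_coe_def by blast
  have "eventually (\<lambda>z. ereal (c + 1) < u z) at_infinity"
    using assms unfolding Conv_coe_def coercive_fn_def tendsto_PInfty by blast
  then obtain R where R: "\<And>w. R \<le> norm w \<Longrightarrow> ereal (c + 1) < u w"
    unfolding eventually_at_infinity by blast
  define R' where "R' = \<bar>R\<bar> + norm x0 + 1"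
  have "0 < R'" unfolding R'_def by (simp add: add_nonneg_pos)
  have sphere: "\<forall>w. norm (w - x0) = R' \<longrightarrow> ereal (c + 1) < u w"
  proof (intro allI impI R)
    fix w assume "norm (w - x0) = R'"
    then show "R \<le> norm w" using norm_triangle_ineq4[of w x0] unfolding R'_def by linarith
  qed
  define M where "M = R' + norm x0"
  define K where "K = max (norm x0 / R' - c) (M / R' + norm a0 * M - d0)"
  have "ereal (norm z / R' - K) \<le> u z" for z
  proof (cases "R' \<le> norm (z - x0)")
    case True
    have "norm z / R' \<le> norm (z - x0) / R' + norm x0 / R'"
      using norm_triangle_ineq2[of z x0] \<open>0 < R'\<close> by (simp add: add_divide_distrib [symmetric] divide_right_mono)
    then have "ereal (norm z / R' - K) \<le> ereal (c + norm (z - x0) / R')"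
      unfolding K_def by simp
    also have "\<dots> \<le> u z"
      using convex_fn_growth_beyond_sphere[OF cv _ \<open>0 < R'\<close> sphere True] x0 by simp
    finally show ?thesis .
  next
    case False
    then have "norm z \<le> M" unfolding M_def using norm_triangle_ineq2[of z x0] by linarith
    then have "\<bar>a0 \<bullet> z\<bar> \<le> norm a0 * M"
      by (rule order_trans[OF Cauchy_Schwarz_ineq2 mult_left_mono[OF _ norm_ge_zero]])
    moreover have "norm z / R' \<le> M / R'" using \<open>norm z \<le> M\<close> \<open>0 < R'\<close> by (simp add: divide_right_mono)
    ultimately have "ereal (norm z / R' - K) \<le> ereal (a0 \<bullet> z + d0)" unfolding K_def by simp
    also have "\<dots> \<le> u z" using m unfolding affine_minorant_def by blast
    finally show ?thesis .
  qed
  then show ?thesis using that[of "1 / R'" K] \<open>0 < R'\<close> by simp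
qed

lemma conj_fn_le_of_linear_growth:
  assumes "\<forall>z. ereal (r * norm z - K) \<le> u z" "norm y \<le> r"
  shows "conj_fn u y \<le> ereal K"
proof -
  have "ereal (y \<bullet> z - K) \<le> u z" for z
  proof -
    have "y \<bullet> z \<le> r * norm z"
      by (rule order_trans[OF norm_cauchy_schwarz mult_right_mono[OF assms(2) norm_ge_zero]])
    then have "ereal (y \<bullet> z - K) \<le> ereal (r * norm z - K)" by simp
    also have "\<dots> \<le> u z" using assms(1) by blast
    finally show ?thesis .
  qed
  then have "affine_minorant u y (- K)" unfolding affine_minorant_def by simp
  then show ?thesis unfolding affine_minorant_iff_conj_fn_le by simp
qed

lemma Conv_coe_conj_fn_bounded_near_0:
  fixes u :: "'a::euclidean_space \<Rightarrow> ereal"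
  assumes "u \<in> Conv_coe"
  shows "\<exists>r>0. \<exists>L K. \<forall>y. norm y \<le> r \<longrightarrow> ereal L \<le> conj_fn u y \<and> conj_fn u y \<le> ereal K"
proof -
  obtain r K where r: "0 < r" and growth: "\<forall>z. ereal (r * norm z - K) \<le> u z"
    using Conv_coe_linear_growth[OF assms] .
  obtain x0 c where x0: "u x0 = ereal c"
    using proper_fn_obtain_finite assms unfolding Conv_coe_def by blast
  have "ereal (- norm x0 * r - c) \<le> conj_fn u y \<and> conj_fn u y \<le> ereal K" if "norm y \<le> r" for y
  proof
    have "\<bar>x0 \<bullet> y\<bar> \<le> norm x0 * r"
      using that by (rule order_trans[OF Cauchy_Schwarz_ineq2 mult_left_mono[OF _ norm_ge_zero]])
    then have "- norm x0 * r \<le> x0 \<bullet> y" by linarith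
    then have "ereal (- norm x0 * r - c) \<le> ereal (x0 \<bullet> y) - u x0" using x0 by simp
    also have "\<dots> \<le> conj_fn u y" by (rule Fenchel_Young)
    finally show "ereal (- norm x0 * r - c) \<le> conj_fn u y" .
    show "conj_fn u y \<le> ereal K" using growth that by (rule conj_fn_le_of_linear_growth)
  qed
  with r show ?thesis by blast
qed

section \<open>The metric\<close>

lemma delta_ok_commute: "delta_ok u v l \<longleftrightarrow> delta_ok v u l"
  unfolding delta_ok_def by blast

lemma delta_ok_refl: "0 \<le> l \<Longrightarrow> delta_ok u u l"
  unfolding delta_ok_def by (simp add: ereal_le_add_self)

lemma delta_ok_mono:
  assumes "delta_ok u v l" "0 < l" "l \<le> l'"
  shows "delta_ok u v l'"
  unfolding delta_ok_def
proof (intro allI impI)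
  fix x :: 'a assume "norm x \<le> 1 / l'"
  also have "1 / l' \<le> 1 / l" using assms(2,3) by (simp add: frac_le)
  finally have h: "conj_fn u x \<le> conj_fn v x + ereal l \<and> conj_fn v x \<le> conj_fn u x + ereal l"
    using assms(1) unfolding delta_ok_def by blast
  have le: "c + ereal l \<le> c + ereal l'" for c using assms(3) by (simp add: add_left_mono)
  show "conj_fn u x \<le> conj_fn v x + ereal l' \<and> conj_fn v x \<le> conj_fn u x + ereal l'"
    using order_trans[OF conjunct1[OF h] le] order_trans[OF conjunct2[OF h] le] ..
qed

lemma ereal_le_add_real_trans:
  fixes a b c :: ereal
  assumes "a \<le> b + ereal s" "b \<le> c + ereal t"
  shows "a \<le> c + ereal (s + t)"
proof -
  have "a \<le> b + ereal s" by (rule assms(1))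
  also have "\<dots> \<le> c + ereal t + ereal s" using assms(2) by (rule add_right_mono)
  also have "\<dots> = c + ereal (s + t)" by (simp add: add.assoc add.commute[of t s])
  finally show ?thesis .
qed

lemma delta_ok_add:
  assumes "delta_ok u v l1" "delta_ok v w l2" "0 < l1" "0 < l2"
  shows "delta_ok u w (l1 + l2)"
  unfolding delta_ok_def
proof (intro allI impI conjI)
  fix x :: 'a assume x: "norm x \<le> 1 / (l1 + l2)"
  have "1 / (l1 + l2) \<le> 1 / l1" "1 / (l1 + l2) \<le> 1 / l2"
    using assms(3,4) by (simp_all add: frac_le)
  then have uv: "conj_fn u x \<le> conj_fn v x + ereal l1 \<and> conj_fn v x \<le> conj_fn u x + ereal l1"
    and vw: "conj_fn v x \<le> conj_fn w x + ereal l2 \<and> conj_fn w x \<le> conj_fn v x + ereal l2"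
    using assms(1,2) x unfolding delta_ok_def by (meson order_trans)+
  show "conj_fn u x \<le> conj_fn w x + ereal (l1 + l2)"
    using ereal_le_add_real_trans[OF conjunct1[OF uv] conjunct1[OF vw]] .
  show "conj_fn w x \<le> conj_fn u x + ereal (l1 + l2)"
    using ereal_le_add_real_trans[OF conjunct2[OF vw] conjunct2[OF uv]] by (simp add: add.commute)
qed

lemma conj_fn_shift:
  fixes u :: "'a::euclidean_space \<Rightarrow> ereal"
  shows "conj_fn (\<lambda>x. u (x - x0) + ereal t0) y = conj_fn u y + ereal (x0 \<bullet> y - t0)"
proof -
  define F where "F x = ereal (x \<bullet> y) - (u (x - x0) + ereal t0)" for x
  have "conj_fn (\<lambda>x. u (x - x0) + ereal t0) y = Sup (F ` range (\<lambda>z. z + x0))"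
    unfolding conj_fn_def F_def by simp
  also have "\<dots> = (SUP z. ereal ((z + x0) \<bullet> y) - (u z + ereal t0))"
    unfolding F_def image_image by simp
  also have "\<dots> = (SUP z. (ereal (z \<bullet> y) - u z) + ereal (x0 \<bullet> y - t0))"
  proof -
    have "ereal ((z + x0) \<bullet> y) - (u z + ereal t0) = (ereal (z \<bullet> y) - u z) + ereal (x0 \<bullet> y - t0)" for z
      by (cases "u z") (auto simp: inner_add_left)
    then show ?thesis by simp
  qed
  also have "\<dots> = conj_fn u y + ereal (x0 \<bullet> y - t0)"
    unfolding conj_fn_def by (rule SUP_ereal_add_left) auto
  finally show ?thesis .
qed

lemma delta_ok_shift:
  fixes u v :: "'a::euclidean_space \<Rightarrow> ereal"
  shows "delta_ok (\<lambda>x. u (x - x0) + ereal t0) (\<lambda>x. v (x - x0) + ereal t0) l \<longleftrightarrow> delta_ok u v l"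
proof -
  have "a + ereal c \<le> b + ereal c + ereal l \<longleftrightarrow> a \<le> b + ereal l" for a b :: ereal and c
  proof -
    have "b + ereal c + ereal l = (b + ereal l) + ereal c" by (simp only: add_ac)
    then show ?thesis by (simp add: ereal_add_le_add_iff2)
  qed
  then show ?thesis unfolding delta_ok_def conj_fn_shift by simp
qed

lemma delta_ok_of_bounds:
  assumes "\<And>y. norm y \<le> 1 / l \<Longrightarrow> ereal L1 \<le> conj_fn u y \<and> conj_fn u y \<le> ereal K1"
    and "\<And>y. norm y \<le> 1 / l \<Longrightarrow> ereal L2 \<le> conj_fn v y \<and> conj_fn v y \<le> ereal K2"
    and "K1 - L2 \<le> l" "K2 - L1 \<le> l"
  shows "delta_ok u v l"
  unfolding delta_ok_def
proof (intro allI impI conjI)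
  fix y :: 'a assume "norm y \<le> 1 / l"
  then have u: "ereal L1 \<le> conj_fn u y" "conj_fn u y \<le> ereal K1"
    and v: "ereal L2 \<le> conj_fn v y" "conj_fn v y \<le> ereal K2"
    using assms(1,2) by blast+
  have "conj_fn u y \<le> ereal K1" by (rule u(2))
  also have "\<dots> \<le> ereal L2 + ereal l" using assms(3) by simp
  also have "\<dots> \<le> conj_fn v y + ereal l" using v(1) by (rule add_right_mono)
  finally show "conj_fn u y \<le> conj_fn v y + ereal l" .
  have "conj_fn v y \<le> ereal K2" by (rule v(2))
  also have "\<dots> \<le> ereal L1 + ereal l" using assms(4) by simp
  also have "\<dots> \<le> conj_fn u y + ereal l" using u(1) by (rule add_right_mono)
  finally show "conj_fn v y \<le> conj_fn u y + ereal l" .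
qed

lemma delta_ok_exists:
  fixes u v :: "'a::euclidean_space \<Rightarrow> ereal"
  assumes "u \<in> Conv_coe" "v \<in> Conv_coe"
  shows "\<exists>l>0. delta_ok u v l"
proof -
  obtain r1 L1 K1 where "0 < r1"
    and bounds_u: "\<forall>y. norm y \<le> r1 \<longrightarrow> ereal L1 \<le> conj_fn u y \<and> conj_fn u y \<le> ereal K1"
    using Conv_coe_conj_fn_bounded_near_0[OF assms(1)] by blast
  obtain r2 L2 K2 where "0 < r2"
    and bounds_v: "\<forall>y. norm y \<le> r2 \<longrightarrow> ereal L2 \<le> conj_fn v y \<and> conj_fn v y \<le> ereal K2"
    using Conv_coe_conj_fn_bounded_near_0[OF assms(2)] by blast
  define r where "r = min r1 r2"
  define l where "l = max (1 / r) (max (K1 - L2) (K2 - L1))"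
  have "0 < 1 / r" using \<open>0 < r1\<close> \<open>0 < r2\<close> by (simp add: r_def)
  have "1 / r \<le> l" "K1 - L2 \<le> l" "K2 - L1 \<le> l" by (simp_all add: l_def le_max_iff_disj)
  have "1 / l \<le> r"
    using le_imp_inverse_le[OF \<open>1 / r \<le> l\<close> \<open>0 < 1 / r\<close>] by (simp add: inverse_eq_divide)
  have "r \<le> r1" "r \<le> r2" by (simp_all add: r_def)
  have "delta_ok u v l"
  proof (rule delta_ok_of_bounds)
    fix y :: 'a assume "norm y \<le> 1 / l"
    with \<open>1 / l \<le> r\<close> \<open>r \<le> r1\<close> \<open>r \<le> r2\<close> have "norm y \<le> r1" "norm y \<le> r2" by linarith+
    with bounds_u bounds_v
    show "ereal L1 \<le> conj_fn u y \<and> conj_fn u y \<le> ereal K1"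
      and "ereal L2 \<le> conj_fn v y \<and> conj_fn v y \<le> ereal K2" by blast+
  qed fact+
  moreover have "0 < l" using \<open>0 < 1 / r\<close> \<open>1 / r \<le> l\<close> by linarith
  ultimately show ?thesis by blast
qed

lemma conj_fn_eq_if_delta_ok:
  assumes "\<And>l. 0 < l \<Longrightarrow> delta_ok u v l"
  shows "conj_fn u = conj_fn v"
proof -
  have le: "conj_fn a y \<le> conj_fn b y" if ok: "\<And>l. 0 < l \<Longrightarrow> delta_ok a b l"
    for a b :: "'a \<Rightarrow> ereal" and y
  proof (rule ereal_le_epsilon2)
    fix e :: real assume "0 < e"
    define l where "l = min e (inverse (norm y + 1))"
    have "0 < l" unfolding l_def using \<open>0 < e\<close> by (simp add: add_nonneg_pos)
    have "l \<le> inverse (norm y + 1)" unfolding l_def by simp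
    from le_imp_inverse_le[OF this \<open>0 < l\<close>] have "norm y + 1 \<le> 1 / l"
      by (simp add: inverse_eq_divide)
    then have "conj_fn a y \<le> conj_fn b y + ereal l" using ok[OF \<open>0 < l\<close>] unfolding delta_ok_def by simp
    also have "\<dots> \<le> conj_fn b y + ereal e" unfolding l_def by (intro add_left_mono) simp
    finally show "conj_fn a y \<le> conj_fn b y + ereal e" .
  qed
  have "delta_ok v u l" if "0 < l" for l
    using assms[OF that] by (rule delta_ok_commute[THEN iffD1])
  then show ?thesis
    using le[OF assms] le by (intro ext antisym) blast+
qed

lemma bdd_below_delta_ok: "bdd_below {l. 0 < l \<and> delta_ok u v l}"
  by (rule bdd_belowI[of _ 0]) simp

lemma delta_le:
  assumes "0 < l" "delta_ok u v l"
  shows "delta u v \<le> l"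
  unfolding delta_def using assms by (intro cInf_lower bdd_below_delta_ok) simp

lemma delta_nonneg:
  assumes "u \<in> Conv_coe" "v \<in> Conv_coe"
  shows "0 \<le> delta u v"
  unfolding delta_def by (rule cInf_greatest) (use delta_ok_exists[OF assms] in auto)

lemma delta_ok_if_delta_less:
  assumes "u \<in> Conv_coe" "v \<in> Conv_coe" "delta u v < l"
  shows "delta_ok u v l"
proof -
  have "{l. 0 < l \<and> delta_ok u v l} \<noteq> {}" using delta_ok_exists[OF assms(1,2)] by blast
  then obtain l' where "0 < l'" "delta_ok u v l'" "l' < l"
    using assms(3) cInf_less_iff[OF _ bdd_below_delta_ok] unfolding delta_def by blast
  then show ?thesis using delta_ok_mono[of u v l' l] by simp
qed

lemma delta_commute: "delta u v = delta v u"
  unfolding delta_def by (simp only: delta_ok_commute)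

lemma delta_triangle:
  assumes "u \<in> Conv_coe" "v \<in> Conv_coe" "w \<in> Conv_coe"
  shows "delta u w \<le> delta u v + delta v w"
proof (rule field_le_epsilon)
  fix e :: real assume "0 < e"
  have pos: "0 < delta u v + e / 2" "0 < delta v w + e / 2"
    using delta_nonneg[OF assms(1,2)] delta_nonneg[OF assms(2,3)] \<open>0 < e\<close> by linarith+
  have "delta_ok u v (delta u v + e / 2)" "delta_ok v w (delta v w + e / 2)"
    using \<open>0 < e\<close> by (simp_all add: delta_ok_if_delta_less assms)
  then have "delta_ok u w (delta u v + e / 2 + (delta v w + e / 2))"
    using delta_ok_add pos by blast
  then have "delta u w \<le> delta u v + e / 2 + (delta v w + e / 2)"
    by (rule delta_le[rotated]) (use pos in linarith)
  then show "delta u w \<le> delta u v + delta v w + e" by simp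
qed

lemma delta_eq_0_iff:
  assumes "u \<in> Conv_coe" "v \<in> Conv_coe"
  shows "delta u v = 0 \<longleftrightarrow> u = v"
proof
  assume "delta u v = 0"
  then have "conj_fn u = conj_fn v"
    using delta_ok_if_delta_less[OF assms] by (intro conj_fn_eq_if_delta_ok) simp
  then show "u = v" using assms unfolding Conv_coe_def by (intro conj_fn_inject[of u v]) auto
next
  assume "u = v"
  have "delta u v \<le> 0 + e" if "0 < e" for e
  proof -
    have "delta_ok u v e" unfolding \<open>u = v\<close> using that by (simp add: delta_ok_refl)
    then show ?thesis using delta_le[OF that] by simp
  qed
  then have "delta u v \<le> 0" by (rule field_le_epsilon)
  then show "delta u v = 0" using delta_nonneg[OF assms] by linarith
qed

lemma delta_shift:
  "delta (\<lambda>x. u (x - x0) + ereal t0) (\<lambda>x. v (x - x0) + ereal t0) = delta u v"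
  unfolding delta_def delta_ok_shift ..

theorem lemma5p11:
  fixes u v w :: "'a::euclidean_space \<Rightarrow> ereal"
  assumes "u \<in> Conv_coe" and "v \<in> Conv_coe" and "w \<in> Conv_coe"
  shows "{l. l > 0 \<and> delta_ok u v l} \<noteq> {}
    \<and> delta u v \<ge> 0
    \<and> (delta u v = 0 \<longleftrightarrow> u = v)
    \<and> delta u v = delta v u
    \<and> delta u w \<le> delta u v + delta v w
    \<and> (\<forall>(x0::'a) (t0::real). delta u v =
           delta (\<lambda>x. u (x - x0) + ereal t0) (\<lambda>x. v (x - x0) + ereal t0))"
proof (intro conjI allI)
  show "{l. l > 0 \<and> delta_ok u v l} \<noteq> {}" using delta_ok_exists[OF assms(1,2)] by blast
  show "delta u v \<ge> 0" by (rule delta_nonneg[OF assms(1,2)])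
  show "delta u v = 0 \<longleftrightarrow> u = v" by (rule delta_eq_0_iff[OF assms(1,2)])
  show "delta u v = delta v u" by (rule delta_commute)
  show "delta u w \<le> delta u v + delta v w" by (rule delta_triangle[OF assms])
  fix x0 t0
  show "delta u v = delta (\<lambda>x. u (x - x0) + ereal t0) (\<lambda>x. v (x - x0) + ereal t0)"
    by (simp only: delta_shift)
qed

end
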